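(* Let $\mathcal N$ be an $(M,N,q)$-Schreier norming set, $x^*\in\mathcal N$, $k\in\mathbb N$, and let $\mathcal T$ be a functional tree of $x^*$, so that $$x^*=\sum_{\beta\in\mathcal T\ \text{terminal}}\frac{\prod_{\alpha\preceq\beta}\gamma_\alpha}{\prod_{\alpha\prec\beta}m_\alpha}\,e^*_{j_\beta}.$$ Then $$\Big\{j_\beta:\ \beta\ \text{terminal},\ |x^*(e_{j_\beta})|\ge\frac{2\,|\prod_{\alpha\preceq\beta}\gamma_\alpha|}{m_{2k}},\ j_\beta\ge 2k\Big\}\in S_{p_k-1}.$$
   Context: Notation. $c_{00}$ is the space of finitely supported real sequences, $(e_i)_{i\ge1}$ its unit vector basis and $(e_i^* )_{i\ge1}$ the biorthogonal functionals. For a functional $x^*=\sum_i a_ie_i^*$, ${\rm supp}\,x^*=\{i:a_i\neq0\}$. For finite $E,F\subset\mathbb N$, $E<F$ means $\max E<\min F$. $Ba(\ell_q)$ is the closed unit ball of $\ell_q$ (applied to finite scalar sequences). For an interval $E\subset\mathbb N$, $Ex^*$ is the restriction of $x^*$ to the coordinates in $E$. Schreier families: $S_0=\{\{n\}:n\in\mathbb N\}\cup\{\emptyset\}$ and $S_{n+1}=\{\bigcup_{i=1}^mF_i: m\in\mathbb N,\ F_i\in S_n,\ m\le\min F_1,\ F_1<\dots<F_m\}\cup\{\emptyset\}$. Successive finite sets $E_1<\dots<E_k$ are $S_n$-admissible if $\{\min E_1,\dots,\min E_k\}\in S_n$; a finite block sequence $x_1^*,\dots,x_k^*$ is $S_n$-admissible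 if $({\rm supp}\,x_i^* )_{i=1}^k$ is. Sequences. $M=(m_i)$, $N=(n_i)$ are increasing sequences of positive integers such that (i) $m_1>3$, $m_2=m_1^5$, $m_{2j+1}=m_{2j}^5$ for $j\ge1$, and there is an increasing sequence $(s_i)$ of positive integers with $m_{2j}=\prod_{i=1}^{j-1}m_{2i}^{s_i}$ for $j\ge2$; (ii) defining for $j\ge2$ $f_j=\max\{\rho n_1+\sum_{1\le i<j}\rho_in_{2i}:\ \rho,\rho_i\in\mathbb N\cup\{0\},\ m_1^{\rho}\prod_{1\le i<j}m_{2i}^{\rho_i}<m_{2j}\}$, one has $4f_j<n_{2j}$ for all $j\ge2$, and $5n_1<n_2$. For $k\ge1$ put $p_k=5n_1+\sum_{1\le i<k}s_in_{2i}$ (so $p_1=5n_1$). Norming sets. A set $\mathcal N\subset{\rm span}\{e_i^*\}$ is norming if it contains every $e_n^*$, satisfies $|x^*(e_n)|\le1$ for all $x^*\in\mathcal N$, $n\in\mathbb N$, is symmetric, and $Ex^*\in\mathcal N$ for all $x^*\in\mathcal N$ and intervals $E\subset\mathbb N$. $(M,N,q)$-Schreier. Let $1<p,q<\infty$, $1/p+1/q=1$. For $k\ge1$ let $\mathcal N_k$ be the set of all $\frac1{m_{2k}}\sum_{i=1}^d\gamma_ix_i^*$ where $d\in\mathbb N$, $(\gamma_i)_{i=1}^d\in Ba(\ell_q)$, and $x_1^*,\dots,x_d^*\in\mathcal N$ is an $S_{n_{2k}}$-admissible block sequence. Let $\mathcal N^q_\infty$ be the union over $k\ge0$ of the sets of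 all $\frac1{m_{2k+1}}\sum_{i=1}^d\gamma_iEx_i^*$ where $(\gamma_i)\in 2^{1/p}Ba(\ell_q)$, $E$ is an interval of $\mathbb N$, $x_1^*,\dots,x_d^*$ is an $S_{n_{2k+1}}$-admissible block sequence with $x_i^*\in\mathcal N_{j_i}$ and $j_1,\dots,j_d$ pairwise distinct. A norming set $\mathcal N$ is $(M,N,q)$-Schreier if $\mathcal N_j\subset\mathcal N$ for all $j\ge1$ and $\mathcal N\subset\bigcup_{j\ge1}\mathcal N_j\cup\mathcal N^q_\infty\cup\{\pm e_n^*:n\in\mathbb N\}$. Functional trees. A finite partially ordered set $(\mathcal T,\preceq)$ is a tree if $\{\beta:\beta\preceq\alpha\}$ is linearly ordered for each $\alpha$; it is rooted if it has a unique minimal element (the root). $\alpha\prec\beta$ means $\alpha\preceq\beta$ and $\alpha\ne\beta$; $D_\alpha(\mathcal T)$ is the set of immediate successors of $\alpha$; $\alpha$ is terminal if it has no successors; a branch is a maximal linearly ordered subset. A functional tree of $x^*\in\mathcal N$ is a finite rooted tree $\mathcal T$ with root $\alpha_0$ together with, for each node $\alpha$, a functional $x^*_\alpha\in\mathcal N$ and a nonzero scalar $\gamma_\alpha$, such that: $\gamma_{\alpha_0}\in\{1,-1\}$ and $x^*=\gamma_{\alpha_0}x^*_{\alpha_0}$; if $\alpha$ is terminal then $x^*_\alpha=e^*_{j_\alpha}$ for some $j_\alpha\in\mathbb N$; if $\alpha$ is not terminal there is $j\in\mathbb N$ with (setting $m_\alpha=m_j$, $n_\alpha=n_j$) $x^*_\alpha=\frac1{m_\alpha}\sum_{\beta\in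 D_\alpha(\mathcal T)}\gamma_\beta x^*_\beta$, where the $x^*_\beta$, $\beta\in D_\alpha(\mathcal T)$, are nonzero with successive supports and form an $S_{n_\alpha}$-admissible block sequence; if $j$ is even, $(\gamma_\beta)_{\beta\in D_\alpha(\mathcal T)}\in Ba(\ell_q)$; if $j$ is odd, $(\gamma_\beta)_{\beta\in D_\alpha(\mathcal T)}\in 2^{1/p}Ba(\ell_q)$, every $\beta\in D_\alpha(\mathcal T)$ is non-terminal with $m_\beta$ of even index, and the $m_\beta$, $\beta\in D_\alpha(\mathcal T)$, are pairwise distinct. Every element of $\mathcal N$ admits at least one functional tree. For any set $A$ of pairwise incomparable nodes meeting every branch, $x^*=\sum_{\alpha\in A}\frac{\prod_{\beta\preceq\alpha}\gamma_\beta}{\prod_{\beta\prec\alpha}m_\beta}x^*_\alpha$. *)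

theory Defs
  imports Complex_Main
begin

text \<open>Indices are positive integers. Schreier families S_n as sets of finite sets of naturals.\<close>

fun schreier :: "nat \<Rightarrow> nat set set" where
  "schreier 0 = {{}} \<union> {{k} | k. k \<ge> 1}"
| "schreier (Suc n) = {{}} \<union>
     {\<Union>(set Fs) | Fs. Fs \<noteq> [] \<and> (\<forall>F\<in>set Fs. F \<in> schreier n \<and> F \<noteq> {})
        \<and> sorted_wrt (\<lambda>A B. Max A < Min B) Fs \<and> length Fs \<le> Min (hd Fs)}"

type_synonym functional = "nat \<Rightarrow> real"

definition supp :: "functional \<Rightarrow> nat set" where
  "supp x = {i. x i \<noteq> 0}"

definition ustar :: "nat \<Rightarrow> functional" where
  "ustar j = (\<lambda>i. if i = j then 1 else 0)"

definition is_interval :: "nat set \<Rightarrow> bool" where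
  "is_interval E \<longleftrightarrow> (\<forall>a b c. a \<in> E \<longrightarrow> c \<in> E \<longrightarrow> a \<le> b \<longrightarrow> b \<le> c \<longrightarrow> b \<in> E)"

definition restr :: "nat set \<Rightarrow> functional \<Rightarrow> functional" where
  "restr E x = (\<lambda>i. if i \<in> E then x i else 0)"

definition block_seq :: "functional list \<Rightarrow> bool" where
  "block_seq xs \<longleftrightarrow> (\<forall>x\<in>set xs. x \<noteq> (\<lambda>_. 0) \<and> finite (supp x))
     \<and> sorted_wrt (\<lambda>x y. Max (supp x) < Min (supp y)) xs"

definition admissible :: "nat \<Rightarrow> functional list \<Rightarrow> bool" where
  "admissible k xs \<longleftrightarrow> block_seq xs \<and> {Min (supp x) | x. x \<in> set xs} \<in> schreier k"

definition lq_ball :: "real \<Rightarrow> real \<Rightarrow> real list \<Rightarrow> bool" where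
  "lq_ball q r gs \<longleftrightarrow> (\<Sum>g\<leftarrow>gs. \<bar>g\<bar> powr q) powr (1 / q) \<le> r"

definition lin_comb :: "real list \<Rightarrow> functional list \<Rightarrow> functional" where
  "lin_comb gs xs = (\<lambda>i. (\<Sum>(g, x)\<leftarrow>zip gs xs. g * x i))"

definition norming :: "functional set \<Rightarrow> bool" where
  "norming NN \<longleftrightarrow>
     (\<forall>x\<in>NN. finite (supp x) \<and> x 0 = 0)
   \<and> (\<forall>j\<ge>1. ustar j \<in> NN)
   \<and> (\<forall>x\<in>NN. \<forall>i. \<bar>x i\<bar> \<le> 1)
   \<and> (\<forall>x\<in>NN. (\<lambda>i. - x i) \<in> NN)
   \<and> (\<forall>x\<in>NN. \<forall>E. is_interval E \<longrightarrow> restr E x \<in> NN)"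

definition f_seq :: "(nat \<Rightarrow> nat) \<Rightarrow> (nat \<Rightarrow> nat) \<Rightarrow> nat \<Rightarrow> nat" where
  "f_seq m n j = Max {\<rho> * n 1 + (\<Sum>i\<in>{1..<j}. \<rho>s i * n (2 * i)) | \<rho> \<rho>s.
       m 1 ^ \<rho> * (\<Prod>i\<in>{1..<j}. m (2 * i) ^ \<rho>s i) < m (2 * j)}"

definition MN_seqs :: "(nat \<Rightarrow> nat) \<Rightarrow> (nat \<Rightarrow> nat) \<Rightarrow> (nat \<Rightarrow> nat) \<Rightarrow> bool" where
  "MN_seqs m n s \<longleftrightarrow>
     (\<forall>i\<ge>1. m i < m (Suc i)) \<and> (\<forall>i\<ge>1. n i < n (Suc i)) \<and> n 1 \<ge> 1
   \<and> m 1 > 3 \<and> m 2 = m 1 ^ 5 \<and> (\<forall>j\<ge>1. m (2 * j + 1) = m (2 * j) ^ 5)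
   \<and> s 1 \<ge> 1 \<and> (\<forall>i\<ge>1. s i < s (Suc i))
   \<and> (\<forall>j\<ge>2. m (2 * j) = (\<Prod>i\<in>{1..<j}. m (2 * i) ^ s i))
   \<and> (\<forall>j\<ge>2. 4 * f_seq m n j < n (2 * j)) \<and> 5 * n 1 < n 2"

definition p_seq :: "(nat \<Rightarrow> nat) \<Rightarrow> (nat \<Rightarrow> nat) \<Rightarrow> nat \<Rightarrow> nat" where
  "p_seq n s k = 5 * n 1 + (\<Sum>i\<in>{1..<k}. s i * n (2 * i))"

definition NN_k :: "(nat \<Rightarrow> nat) \<Rightarrow> (nat \<Rightarrow> nat) \<Rightarrow> real \<Rightarrow> functional set \<Rightarrow> nat \<Rightarrow> functional set" where
  "NN_k m n q NN k = {(\<lambda>i. (1 / real (m (2 * k))) * lin_comb gs xs i) | gs xs.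
      xs \<noteq> [] \<and> length gs = length xs \<and> lq_ball q 1 gs
      \<and> set xs \<subseteq> NN \<and> admissible (n (2 * k)) xs}"

definition NN_inf :: "(nat \<Rightarrow> nat) \<Rightarrow> (nat \<Rightarrow> nat) \<Rightarrow> real \<Rightarrow> real \<Rightarrow> functional set \<Rightarrow> functional set" where
  "NN_inf m n p q NN = (\<Union>k. {(\<lambda>i. (1 / real (m (2 * k + 1))) * lin_comb gs (map (restr E) xs) i)
      | gs E xs js. xs \<noteq> [] \<and> length gs = length xs \<and> lq_ball q (2 powr (1 / p)) gs
      \<and> is_interval E \<and> admissible (n (2 * k + 1)) xs
      \<and> length js = length xs \<and> distinct js \<and> (\<forall>j\<in>set js. j \<ge> 1)
      \<and> (\<forall>i<length xs. xs ! i \<in> NN_k m n q NN (js ! i))})"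

definition MNq_schreier :: "(nat \<Rightarrow> nat) \<Rightarrow> (nat \<Rightarrow> nat) \<Rightarrow> real \<Rightarrow> real \<Rightarrow> functional set \<Rightarrow> bool" where
  "MNq_schreier m n p q NN \<longleftrightarrow> norming NN
     \<and> (\<forall>j\<ge>1. NN_k m n q NN j \<subseteq> NN)
     \<and> NN \<subseteq> (\<Union>j\<in>{1..}. NN_k m n q NN j) \<union> NN_inf m n p q NN
            \<union> {ustar j | j. j \<ge> 1} \<union> {(\<lambda>i. - ustar j i) | j. j \<ge> 1}"

text \<open>A node is either terminal (Leaf j, functional e*_j) or a node with weight index j
  (m_alpha = m_j, n_alpha = n_j) and a list of immediate successors, each with its scalar gamma.\<close>
datatype ftree = Leaf nat | Node nat "(real \<times> ftree) list"

fun tval :: "(nat \<Rightarrow> nat) \<Rightarrow> ftree \<Rightarrow> functional" where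
  "tval m (Leaf j) = ustar j"
| "tval m (Node j cs) = (\<lambda>i. (1 / real (m j)) * sum_list (map (\<lambda>(g, c). g * tval m c i) cs))"

definition node_index :: "ftree \<Rightarrow> nat" where
  "node_index t = (case t of Leaf j \<Rightarrow> j | Node j _ \<Rightarrow> j)"

definition is_node :: "ftree \<Rightarrow> bool" where
  "is_node t = (case t of Leaf _ \<Rightarrow> False | Node _ cs \<Rightarrow> cs \<noteq> [])"

fun wf_tree :: "(nat \<Rightarrow> nat) \<Rightarrow> (nat \<Rightarrow> nat) \<Rightarrow> real \<Rightarrow> real \<Rightarrow> functional set \<Rightarrow> ftree \<Rightarrow> bool" where
  "wf_tree m n p q NN (Leaf j) \<longleftrightarrow> j \<ge> 1 \<and> ustar j \<in> NN"
| "wf_tree m n p q NN (Node j cs) \<longleftrightarrow> j \<ge> 1 \<and> cs \<noteq> [] \<and> tval m (Node j cs) \<in> NN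
     \<and> (\<forall>gc\<in>set cs. fst gc \<noteq> 0 \<and> tval m (snd gc) \<noteq> (\<lambda>_. 0) \<and> wf_tree m n p q NN (snd gc))
     \<and> admissible (n j) (map (\<lambda>(g, c). tval m c) cs)
     \<and> (even j \<longrightarrow> lq_ball q 1 (map fst cs))
     \<and> (odd j \<longrightarrow> lq_ball q (2 powr (1 / p)) (map fst cs)
          \<and> (\<forall>gc\<in>set cs. is_node (snd gc) \<and> even (node_index (snd gc)))
          \<and> distinct (map (\<lambda>(g, c). node_index c) cs))"

text \<open>For each terminal node beta: (j_beta, product of the gammas of the nodes strictly
  below the root up to and including beta, product of m_alpha over the non-terminal
  nodes alpha strictly preceding beta).\<close>
fun leaves :: "(nat \<Rightarrow> nat) \<Rightarrow> ftree \<Rightarrow> (nat \<times> real \<times> real) list" where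
  "leaves m (Leaf j) = [(j, 1, 1)]"
| "leaves m (Node j cs) = concat (map (\<lambda>(g, c).
       map (\<lambda>(i, a, b). (i, g * a, real (m j) * b)) (leaves m c)) cs)"

definition functional_tree :: "(nat \<Rightarrow> nat) \<Rightarrow> (nat \<Rightarrow> nat) \<Rightarrow> real \<Rightarrow> real \<Rightarrow> functional set
    \<Rightarrow> functional \<Rightarrow> real \<Rightarrow> ftree \<Rightarrow> bool" where
  "functional_tree m n p q NN x g0 t \<longleftrightarrow> (g0 = 1 \<or> g0 = -1) \<and> x = (\<lambda>i. g0 * tval m t i)
     \<and> wf_tree m n p q NN t"

end

theory Submission
  imports Defs
begin

(*
  A terminal node beta with index j, coefficient
  product a = prod gamma and weight b = prod m_alpha has x(e_j) = g0 * a / b, so the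
  condition |x(e_j)| >= 2 |g0 a| / m_{2k} says exactly b <= m_{2k} / 2.  Hence the set
  in the theorem is the set  selected m k t B  of leaves j >= 2k whose weight is at
  most B = m_{2k} / 2.

  The proof is an induction over the tree that tracks a "budget": call the indices
  i < k levels, with weight m_1 resp. m_{2i} and cost n_1 resp. n_{2i}; budget(B) is
  the largest total cost of a multiset of levels of total weight at most B.
  (1) Combinatorics of Schreier families: S_b[S_c] is contained in S_{b+c}.
  (2) At a node of weight m_J <= B < m_{2k} the children are selected with the
      weight bound B / m_J.  An even node 2i (i < k) is an S_{n_{2i}}-admissible
      block sequence, so by (1) the union costs n_{2i} more; an odd node has at most
      k - 1 relevant children, with distinct even indices below 2k, all of whose
      selected leaves are >= 2k, so the union costs one more.  Either way the cost
      is covered by the budget: selected m k t B lies in S_{budget(B)}.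
  (3) Arithmetic of M and N: a multiset of levels of weight < m_{2k} has cost
      < p_k; this is where the growth conditions on M, N and the numbers f_j enter.
      Hence budget(m_{2k} / 2) <= p_k - 1, and the theorem follows.
*)

section \<open>Schreier families\<close>

definition set_less :: "nat set \<Rightarrow> nat set \<Rightarrow> bool" where
  "set_less A B \<longleftrightarrow> (\<forall>x\<in>A. \<forall>y\<in>B. x < y)"

lemma schreier_finite: "A \<in> schreier n \<Longrightarrow> finite A"
  by (induction n arbitrary: A) auto

lemma schreier_empty: "{} \<in> schreier n"
  by (cases n) auto

lemma schreier_singleton: "j \<ge> 1 \<Longrightarrow> {j} \<in> schreier n"
proof (induction n)
  case (Suc n)
  have "{j} = \<Union>(set [{j}])" by simp
  moreover have "[{j}] \<noteq> [] \<and> (\<forall>F\<in>set [{j}]. F \<in> schreier n \<and> F \<noteq> {})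
        \<and> sorted_wrt (\<lambda>A B. Max A < Min B) [{j}] \<and> length [{j}] \<le> Min (hd [{j}])"
    using Suc by auto
  ultimately show ?case by (simp only: schreier.simps) blast
qed auto

lemma schreier_SucI:
  assumes "\<forall>F\<in>set Fs. F \<in> schreier n \<and> F \<noteq> {}"
    and "sorted_wrt set_less Fs"
    and "Fs \<noteq> [] \<Longrightarrow> length Fs \<le> Min (hd Fs)"
  shows "\<Union>(set Fs) \<in> schreier (Suc n)"
proof (cases "Fs = []")
  case False
  have "sorted_wrt (\<lambda>A B. Max A < Min B) Fs"
    using assms(2)
  proof (rule sorted_wrt_mono_rel[rotated])
    fix A B assume AB: "A \<in> set Fs" "B \<in> set Fs" "set_less A B"
    then have "finite A" "A \<noteq> {}" "finite B" "B \<noteq> {}" using assms(1) schreier_finite by auto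
    then have "Max A \<in> A" "Min B \<in> B" by simp_all
    then show "Max A < Min B" using AB(3) unfolding set_less_def by blast
  qed
  then show ?thesis using False assms by (simp only: schreier.simps) blast
qed simp

lemma schreier_Suc_mono: "A \<in> schreier n \<Longrightarrow> A \<in> schreier (Suc n)"
proof (induction n arbitrary: A)
  case 0
  then show ?case using schreier_singleton[of _ 1] schreier_empty by auto
next
  case (Suc n)
  show ?case
  proof (cases "A = {}")
    case False
    then obtain Fs where "A = \<Union>(set Fs)" "Fs \<noteq> []" "\<forall>F\<in>set Fs. F \<in> schreier n \<and> F \<noteq> {}"
        "sorted_wrt (\<lambda>A B. Max A < Min B) Fs" "length Fs \<le> Min (hd Fs)"
      using Suc.prems by auto
    then show ?thesis using Suc.IH by (simp only: schreier.simps(2)[of "Suc n"]) blast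
  qed (simp add: schreier_empty)
qed

lemma schreier_mono: "n \<le> n' \<Longrightarrow> A \<in> schreier n \<Longrightarrow> A \<in> schreier n'"
  by (induction n' rule: dec_induct) (blast intro: schreier_Suc_mono)+

definition anchored :: "nat \<Rightarrow> nat set \<Rightarrow> (nat \<times> nat set) list \<Rightarrow> bool" where
  "anchored b M ps \<longleftrightarrow>
     sorted_wrt (\<lambda>p p'. fst p < fst p' \<and> set_less (snd p) (snd p')) ps
   \<and> (\<forall>p\<in>set ps. fst p \<in> M \<and> snd p \<noteq> {} \<and> snd p \<in> schreier b \<and> (\<forall>x\<in>snd p. fst p \<le> x))"

lemma anchored_order:
  assumes "anchored b M ps" "p \<in> set ps" "p' \<in> set ps" "fst p < fst p'"
  shows "set_less (snd p) (snd p')"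
proof -
  let ?R = "\<lambda>p p'. fst p < fst p' \<and> set_less (snd p) (snd p')"
  have srt: "sorted_wrt ?R ps" using assms(1) unfolding anchored_def by simp
  obtain i i' where i: "i < length ps" "ps ! i = p" and i': "i' < length ps" "ps ! i' = p'"
    using assms(2,3) by (metis in_set_conv_nth)
  consider "i < i'" | "i = i'" | "i' < i" by linarith
  then show ?thesis
  proof cases
    case 1 then show ?thesis using srt i i' by (auto simp: sorted_wrt_iff_nth_less)
  next
    case 2 then show ?thesis using i i' assms(4) by simp
  next
    case 3 then have "fst p' < fst p" using srt i i' by (auto simp: sorted_wrt_iff_nth_less)
    then show ?thesis using assms(4) by simp
  qed
qed

lemma anchored_filter: "anchored b M ps \<Longrightarrow> anchored b F (filter (\<lambda>p. fst p \<in> F) ps)"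
  unfolding anchored_def by (auto simp: sorted_wrt_filter)

lemma anchored_singleton:
  assumes "anchored b M ps" "M \<subseteq> {a}"
  shows "\<Union>(snd ` set ps) \<in> schreier b"
proof (cases ps)
  case Nil then show ?thesis by (simp add: schreier_empty)
next
  case (Cons p ps')
  have "ps' = []"
  proof (rule ccontr)
    assume "ps' \<noteq> []"
    then obtain p' where "p' \<in> set ps'" using hd_in_set by blast
    then have "fst p < fst p'" "fst p \<in> M" "fst p' \<in> M"
      using assms(1) Cons unfolding anchored_def by auto
    then have "fst p < fst p'" "fst p = a" "fst p' = a" using assms(2) by auto
    then show False by simp
  qed
  then show ?thesis using assms(1) Cons unfolding anchored_def by auto
qed

lemma schreier_union_Suc:
  assumes srt: "sorted_wrt set_less As" and As: "\<forall>A\<in>set As. A \<in> schreier b"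
    and few: "length (filter (\<lambda>A. A \<noteq> {}) As) \<le> d" and large: "\<forall>A\<in>set As. \<forall>x\<in>A. d \<le> x"
  shows "\<Union>(set As) \<in> schreier (Suc b)"
proof -
  define Fs where "Fs = filter (\<lambda>A. A \<noteq> {}) As"
  have "\<Union>(set Fs) \<in> schreier (Suc b)"
  proof (rule schreier_SucI)
    show "\<forall>F\<in>set Fs. F \<in> schreier b \<and> F \<noteq> {}" using As unfolding Fs_def by auto
    show "sorted_wrt set_less Fs" using srt unfolding Fs_def by (simp add: sorted_wrt_filter)
    assume "Fs \<noteq> []"
    then have "hd Fs \<in> set Fs" by simp
    then have "hd Fs \<in> set As" "hd Fs \<noteq> {}" "finite (hd Fs)"
      using As schreier_finite unfolding Fs_def by auto
    then have "d \<le> Min (hd Fs)" using large by simp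
    then show "length Fs \<le> Min (hd Fs)" using few unfolding Fs_def by simp
  qed
  moreover have "\<Union>(set Fs) = \<Union>(set As)" unfolding Fs_def by auto
  ultimately show ?thesis by simp
qed

lemma sorted_blocks_hd_min:
  assumes "sorted_wrt (\<lambda>A B. Max A < Min B) Fs" "\<forall>F\<in>set Fs. finite F \<and> F \<noteq> {}" "F \<in> set Fs"
  shows "Min (hd Fs) \<le> Min F"
proof (cases Fs)
  case (Cons F0 Fs')
  show ?thesis
  proof (cases "F = F0")
    case False
    then have "Max F0 < Min F" using assms(1,3) Cons by auto
    moreover have "Min F0 \<le> Max F0" using assms(2) Cons by simp
    ultimately show ?thesis using Cons by simp
  qed (use Cons in simp)
qed (use assms(3) in simp)

definition anchored_part :: "nat set \<Rightarrow> (nat \<times> nat set) list \<Rightarrow> nat set" where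
  "anchored_part F ps = \<Union>(snd ` set (filter (\<lambda>p. fst p \<in> F) ps))"

lemma anchored_part_ge:
  assumes "anchored b M ps" "finite F" "x \<in> anchored_part F ps"
  shows "Min F \<le> x"
proof -
  obtain p where "p \<in> set ps" "fst p \<in> F" "x \<in> snd p"
    using assms(3) unfolding anchored_part_def by auto
  then show ?thesis using assms(1,2) unfolding anchored_def by (meson Min_le le_trans)
qed

lemma anchored_parts_union:
  assumes "anchored b (\<Union>(set Fs)) ps"
  shows "(\<Union>F\<in>set Fs. anchored_part F ps) = \<Union>(snd ` set ps)"
proof -
  have "\<forall>p\<in>set ps. \<exists>F\<in>set Fs. fst p \<in> F" using assms unfolding anchored_def by auto
  then show ?thesis unfolding anchored_part_def by fastforce
qed

lemma anchored_parts_sorted: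
  assumes anc: "anchored b M ps" and srt: "sorted_wrt (\<lambda>A B. Max A < Min B) Fs"
    and fin: "\<forall>F\<in>set Fs. finite F"
  shows "sorted_wrt (\<lambda>F F'. set_less (anchored_part F ps) (anchored_part F' ps)) Fs"
  using srt
proof (rule sorted_wrt_mono_rel[rotated])
  fix F F' assume F: "F \<in> set Fs" "F' \<in> set Fs" "Max F < Min F'"
  show "set_less (anchored_part F ps) (anchored_part F' ps)" unfolding set_less_def
  proof (intro ballI)
    fix x y assume "x \<in> anchored_part F ps" "y \<in> anchored_part F' ps"
    then obtain p p' where p: "p \<in> set ps" "fst p \<in> F" "x \<in> snd p"
      and p': "p' \<in> set ps" "fst p' \<in> F'" "y \<in> snd p'" unfolding anchored_part_def by auto
    have "fst p < fst p'" using F p(2) p'(2) fin by (meson Max_ge Min_le le_less_trans less_le_trans)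
    then show "x < y" using anchored_order[OF anc p(1) p'(1)] p(3) p'(3)
      unfolding set_less_def by blast
  qed
qed

text \<open>Induction on c: an S_{c+1}-set splits into S_c-blocks F_1 < ... < F_d with
  d <= min F_1, the family splits according to the block containing the anchor, and
  the at most d resulting S_{b+c}-sets are collected by one more Schreier step.\<close>

lemma schreier_compose:
  "M \<in> schreier c \<Longrightarrow> anchored b M ps \<Longrightarrow> \<Union>(snd ` set ps) \<in> schreier (b + c)"
proof (induction c arbitrary: M ps)
  case 0
  then obtain a where "M \<subseteq> {a}" by auto
  then show ?case using anchored_singleton 0 by simp
next
  case (Suc c)
  show ?case
  proof (cases "M = {}")
    case True
    then have "ps = []" using Suc.prems(2) unfolding anchored_def by (cases ps) auto
    then show ?thesis by (simp add: schreier_empty)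
  next
    case False
    then obtain Fs where Fs: "M = \<Union>(set Fs)" "Fs \<noteq> []"
        "\<forall>F\<in>set Fs. F \<in> schreier c \<and> F \<noteq> {}"
        "sorted_wrt (\<lambda>A B. Max A < Min B) Fs" "length Fs \<le> Min (hd Fs)"
      using Suc.prems(1) by auto
    let ?parts = "map (\<lambda>F. anchored_part F ps) Fs"
    have fin: "\<forall>F\<in>set Fs. finite F \<and> F \<noteq> {}" using Fs(3) schreier_finite by blast
    have "\<Union>(set ?parts) \<in> schreier (Suc (b + c))"
    proof (rule schreier_union_Suc)
      show "sorted_wrt set_less ?parts"
        using anchored_parts_sorted[OF Suc.prems(2) Fs(4)] fin by (simp add: sorted_wrt_map)
      have "anchored_part F ps \<in> schreier (b + c)" if "F \<in> set Fs" for F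
        unfolding anchored_part_def
        by (rule Suc.IH[OF _ anchored_filter[OF Suc.prems(2)]]) (use Fs(3) that in blast)
      then show "\<forall>K\<in>set ?parts. K \<in> schreier (b + c)" by auto
      show "length (filter (\<lambda>K. K \<noteq> {}) ?parts) \<le> Min (hd Fs)"
        by (rule le_trans[OF length_filter_le]) (simp add: Fs(5))
      show "\<forall>K\<in>set ?parts. \<forall>x\<in>K. Min (hd Fs) \<le> x"
      proof (intro ballI)
        fix K x assume "K \<in> set ?parts" "x \<in> K"
        then obtain F where F: "F \<in> set Fs" "x \<in> anchored_part F ps" by auto
        then have "Min F \<le> x" using anchored_part_ge[OF Suc.prems(2)] fin by blast
        then show "Min (hd Fs) \<le> x" using sorted_blocks_hd_min[OF Fs(4) fin F(1)] by simp
      qed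
    qed
    moreover have "\<Union>(set ?parts) = \<Union>(snd ` set ps)"
      using anchored_parts_union[of b Fs ps] Suc.prems(2) Fs(1) by simp
    ultimately show ?thesis by (simp only: add_Suc_right)
  qed
qed

lemma successive_selection:
  fixes S A :: "'a \<Rightarrow> nat set"
  assumes srt: "sorted_wrt (\<lambda>c c'. Max (S c) < Min (S c')) cs"
    and S: "\<And>c. c \<in> set cs \<Longrightarrow> finite (S c) \<and> S c \<noteq> {} \<and> A c \<subseteq> S c"
  shows "sorted_wrt (\<lambda>c c'. Min (S c) < Min (S c') \<and> set_less (A c) (A c')) cs"
  using srt
proof (rule sorted_wrt_mono_rel[rotated])
  fix c c' assume c: "c \<in> set cs" "c' \<in> set cs" "Max (S c) < Min (S c')"
  have "Min (S c) \<le> Max (S c)" using S[OF c(1)] by simp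
  moreover have "set_less (A c) (A c')" unfolding set_less_def
  proof (intro ballI)
    fix x y assume "x \<in> A c" "y \<in> A c'"
    then have "x \<in> S c" "y \<in> S c'" using S c(1,2) by auto
    then have "x \<le> Max (S c)" "Min (S c') \<le> y" using S c(1,2) by simp_all
    then show "x < y" using c(3) by simp
  qed
  ultimately show "Min (S c) < Min (S c') \<and> set_less (A c) (A c')" using c(3) by simp
qed

lemma schreier_union_anchored:
  fixes S A :: "'a \<Rightarrow> nat set"
  assumes anchors: "(\<lambda>c. Min (S c)) ` set cs \<in> schreier N"
    and srt: "sorted_wrt (\<lambda>c c'. Max (S c) < Min (S c')) cs"
    and S: "\<And>c. c \<in> set cs \<Longrightarrow> finite (S c) \<and> S c \<noteq> {} \<and> A c \<subseteq> S c \<and> A c \<in> schreier b"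
  shows "(\<Union>c\<in>set cs. A c) \<in> schreier (b + N)"
proof -
  define ps where "ps = map (\<lambda>c. (Min (S c), A c)) (filter (\<lambda>c. A c \<noteq> {}) cs)"
  have "sorted_wrt (\<lambda>c c'. Min (S c) < Min (S c') \<and> set_less (A c) (A c')) cs"
    using successive_selection[OF srt] S by blast
  moreover have "Min (S c) \<le> x" if "c \<in> set cs" "x \<in> A c" for c x
    using S[OF that(1)] that(2) by (meson Min_le subsetD)
  ultimately have "anchored b ((\<lambda>c. Min (S c)) ` set cs) ps"
    unfolding anchored_def ps_def using S
    by (auto simp: sorted_wrt_map sorted_wrt_filter)
  moreover have "\<Union>(snd ` set ps) = (\<Union>c\<in>set cs. A c)" unfolding ps_def by auto
  ultimately show ?thesis using schreier_compose[OF anchors] by metis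
qed

section \<open>Arithmetic of the sequences M and N\<close>

text \<open>Level i < k stands for the weight m_1 (i = 0) or m_{2i} (i >= 1), and
  likewise for the costs n_1, n_{2i}.\<close>

definition level :: "(nat \<Rightarrow> nat) \<Rightarrow> nat \<Rightarrow> nat" where
  "level f i = (if i = 0 then f 1 else f (2 * i))"

lemma increasing_less:
  "(\<forall>i\<ge>1. f i < f (Suc i)) \<Longrightarrow> 1 \<le> i \<Longrightarrow> i < j \<Longrightarrow> (f i :: nat) < f j"
proof (induction j)
  case (Suc j)
  then show ?case by (cases "i = j") (auto intro: less_trans)
qed simp

lemma increasing_le:
  "(\<forall>i\<ge>1. f i < f (Suc i)) \<Longrightarrow> 1 \<le> i \<Longrightarrow> i \<le> j \<Longrightarrow> (f i :: nat) \<le> f j"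
  using increasing_less[of f i j] by (cases "i = j") auto

lemma level_ge_4:
  assumes "\<forall>i\<ge>1. m i < m (Suc i)" "m 1 > 3"
  shows "level m i \<ge> 4"
  using increasing_le[OF assms(1), of 1 "2 * i"] assms(2) unfolding level_def by auto

lemma MN_seqs_m_ge_2:
  assumes "MN_seqs m n s" "i \<ge> 1"
  shows "m i \<ge> 2"
  using increasing_le[of m 1 i] assms unfolding MN_seqs_def by auto

lemma MN_m_pos: "MN_seqs m n s \<Longrightarrow> \<forall>j\<ge>1. m j \<ge> (1::nat)"
  using MN_seqs_m_ge_2 by fastforce

lemma MN_m_le: "MN_seqs m n s \<Longrightarrow> 1 \<le> i \<Longrightarrow> i \<le> j \<Longrightarrow> m i \<le> m j"
  using increasing_le[of m i j] unfolding MN_seqs_def by blast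

lemma MN_level_ge_2: "MN_seqs m n s \<Longrightarrow> level m i \<ge> 2"
  using level_ge_4[of m i] unfolding MN_seqs_def by fastforce

lemma MN_level_n_pos: "MN_seqs m n s \<Longrightarrow> level n i \<ge> 1"
  using increasing_le[of n 1 "2 * i"] unfolding MN_seqs_def level_def by auto

lemma prod_list_map_eq_prod_count:
  fixes f :: "'a \<Rightarrow> 'b::comm_monoid_mult"
  assumes "finite X"
  shows "set xs \<subseteq> X \<Longrightarrow> prod_list (map f xs) = (\<Prod>x\<in>X. f x ^ count_list xs x)"
proof (induction xs)
  case (Cons a xs)
  have "(\<Prod>x\<in>X. f x ^ count_list (a # xs) x)
      = (\<Prod>x\<in>X. f x ^ count_list xs x * (if x = a then f x else 1))"
    by (rule prod.cong) (auto simp: mult.commute)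
  also have "\<dots> = (\<Prod>x\<in>X. f x ^ count_list xs x) * f a"
    using Cons.prems assms by (simp add: prod.distrib)
  finally show ?case using Cons by (simp add: mult.commute)
qed simp

text \<open>Weights and costs of a list of levels in terms of the multiplicities of the levels,
  matching the exponents rho in the definition of f_j.\<close>

lemma level_prod_count:
  assumes "set L \<subseteq> {0..<j}" "j \<ge> 1"
  shows "prod_list (map (level f) L) = f 1 ^ count_list L 0 * (\<Prod>i\<in>{1..<j}. f (2*i) ^ count_list L i)"
proof -
  have "prod_list (map (level f) L) = (\<Prod>x\<in>{0..<j}. level f x ^ count_list L x)"
    using assms by (intro prod_list_map_eq_prod_count) auto
  also have "{0..<j} = insert 0 {1..<j}" using assms(2) by auto
  also have "(\<Prod>x\<in>insert 0 {1..<j}. level f x ^ count_list L x)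
      = f 1 ^ count_list L 0 * (\<Prod>i\<in>{1..<j}. f (2*i) ^ count_list L i)"
    by (simp add: level_def)
  finally show ?thesis .
qed

lemma level_sum_count:
  assumes "set L \<subseteq> {0..<j}" "j \<ge> 1"
  shows "sum_list (map (level f) L) = count_list L 0 * f 1 + (\<Sum>i\<in>{1..<j}. count_list L i * f (2*i))"
proof -
  have "sum_list (map (level f) L) = (\<Sum>x\<in>{0..<j}. count_list L x * level f x)"
    using assms by (intro sum_list_map_eq_sum_count2) auto
  also have "{0..<j} = insert 0 {1..<j}" using assms(2) by auto
  also have "(\<Sum>x\<in>insert 0 {1..<j}. count_list L x * level f x)
      = count_list L 0 * f 1 + (\<Sum>i\<in>{1..<j}. count_list L i * f (2*i))"
    by (simp add: level_def)
  finally show ?thesis .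
qed

text \<open>Elementary bounds for products of natural numbers; the first holds as e < 2^e.\<close>

lemma exponent_lt: "2 \<le> (a::nat) \<Longrightarrow> a ^ e \<le> X \<Longrightarrow> X < M \<Longrightarrow> e < M"
  using less_exp[of e] power_mono[of 2 a e] by linarith

lemma factor_le_prod: "finite I \<Longrightarrow> i \<in> I \<Longrightarrow> (\<forall>x\<in>I. 1 \<le> g x) \<Longrightarrow> (g i :: nat) \<le> prod g I"
  by (metis dvd_imp_le dvd_prodI not_one_le_zero prod_pos zero_less_iff_neq_zero)

lemma f_seq_bound:
  assumes m2: "\<And>i. i \<ge> 1 \<Longrightarrow> m i \<ge> 2" and j: "j \<ge> 1"
    and L: "set L \<subseteq> {0..<j}" "prod_list (map (level m) L) < m (2 * j)"
  shows "sum_list (map (level n) L) \<le> f_seq m n j"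
proof -
  define S where "S = {\<rho> * n 1 + (\<Sum>i\<in>{1..<j}. \<rho>s i * n (2 * i)) | \<rho> \<rho>s.
       m 1 ^ \<rho> * (\<Prod>i\<in>{1..<j}. m (2 * i) ^ \<rho>s i) < m (2 * j)}"
  have "S \<subseteq> {..m (2 * j) * n 1 + (\<Sum>i\<in>{1..<j}. m (2 * j) * n (2 * i))}"
  proof
    fix v assume "v \<in> S"
    then obtain \<rho> \<rho>s where v: "v = \<rho> * n 1 + (\<Sum>i\<in>{1..<j}. \<rho>s i * n (2 * i))"
      and c: "m 1 ^ \<rho> * (\<Prod>i\<in>{1..<j}. m (2 * i) ^ \<rho>s i) < m (2 * j)" unfolding S_def by auto
    have factors: "\<forall>i\<in>{1..<j}. 1 \<le> m (2 * i) ^ \<rho>s i"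
    proof
      fix i assume "i \<in> {1..<j}"
      then show "1 \<le> m (2 * i) ^ \<rho>s i" using m2[of "2 * i"] by (simp add: one_le_power)
    qed
    have "1 \<le> (\<Prod>i\<in>{1..<j}. m (2 * i) ^ \<rho>s i)"
      using factors by (intro prod_ge_1) auto
    then have "\<rho> < m (2 * j)" using exponent_lt[OF m2[of 1] _ c] by simp
    moreover have "\<rho>s i < m (2 * j)" if i: "i \<in> {1..<j}" for i
    proof -
      have "m (2 * i) ^ \<rho>s i \<le> (\<Prod>i\<in>{1..<j}. m (2 * i) ^ \<rho>s i)"
        using factors i by (intro factor_le_prod) auto
      also have "\<dots> \<le> m 1 ^ \<rho> * (\<Prod>i\<in>{1..<j}. m (2 * i) ^ \<rho>s i)"
        using m2[of 1] by (simp add: Suc_le_eq)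
      finally have "m (2 * i) ^ \<rho>s i \<le> m 1 ^ \<rho> * (\<Prod>i\<in>{1..<j}. m (2 * i) ^ \<rho>s i)" .
      then show ?thesis using exponent_lt[OF m2[of "2 * i"] _ c] i by simp
    qed
    ultimately show "v \<in> {..m (2 * j) * n 1 + (\<Sum>i\<in>{1..<j}. m (2 * j) * n (2 * i))}"
      unfolding v by (auto intro!: add_mono sum_mono mult_right_mono simp: less_imp_le)
  qed
  then have "finite S" by (rule finite_subset) simp
  moreover have "sum_list (map (level n) L) \<in> S"
    using level_sum_count[OF L(1) j, of n] level_prod_count[OF L(1) j, of m] L(2)
    unfolding S_def by (intro CollectI exI[of _ "count_list L 0"] exI[of _ "count_list L"]) simp
  ultimately show ?thesis unfolding f_seq_def S_def[symmetric] by simp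
qed

lemma prod_list_ge_1: "\<forall>x\<in>set L. 1 \<le> g x \<Longrightarrow> 1 \<le> prod_list (map g L :: nat list)"
  by (induction L) auto

lemma heavy_prefix:
  fixes g :: "'a \<Rightarrow> nat"
  assumes "M \<le> prod_list (map g L)" "1 < M"
  obtains P x R where "L = P @ x # R" "prod_list (map g P) < M"
    "M \<le> prod_list (map g P) * g x"
  using assms
proof (induction L arbitrary: thesis rule: rev_induct)
  case (snoc a L)
  show ?case
  proof (cases "M \<le> prod_list (map g L)")
    case True
    then show ?thesis using snoc.IH[of thesis] snoc.prems(1,3) by (metis append.assoc append_Cons)
  next
    case False
    then show ?thesis using snoc.prems(1,2) by simp
  qed
qed simp

text \<open>Greedy blocking: if every list of weight < M costs at most phi, then a list of weight
  < M^t (with all single weights < M) costs at most (2t - 1) phi, since it splits into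
  t blocks of weight < M, separated by single elements.\<close>

lemma greedy_block_bound:
  fixes g c :: "'a \<Rightarrow> nat"
  assumes M: "1 < M" and gA: "\<forall>a\<in>A. 1 \<le> g a \<and> g a < M"
    and small: "\<And>L. set L \<subseteq> A \<Longrightarrow> prod_list (map g L) < M \<Longrightarrow> sum_list (map c L) \<le> \<phi>"
  shows "set L \<subseteq> A \<Longrightarrow> prod_list (map g L) < M ^ t \<Longrightarrow> sum_list (map c L) \<le> (2 * t - 1) * \<phi>"
proof (induction t arbitrary: L)
  case 0
  have "1 \<le> prod_list (map g L)" using 0 gA by (intro prod_list_ge_1) auto
  then show ?case using 0 by simp
next
  case (Suc t)
  show ?case
  proof (cases "prod_list (map g L) < M")
    case True
    then show ?thesis using small Suc.prems(1) by fastforce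
  next
    case False
    then obtain P x R where L: "L = P @ x # R" and P: "prod_list (map g P) < M"
      and Px: "M \<le> prod_list (map g P) * g x"
      using heavy_prefix M by (metis not_le)
    have A: "set P \<subseteq> A" "x \<in> A" "set R \<subseteq> A" using Suc.prems(1) L by auto
    have prodR: "prod_list (map g R) < M ^ t"
    proof -
      have "M * prod_list (map g R) \<le> prod_list (map g L)"
        using Px L by (simp add: mult.assoc)
      also have "\<dots> < M * M ^ t" using Suc.prems(2) by simp
      finally show ?thesis using M by simp
    qed
    have "t \<ge> 1" using prodR prod_list_ge_1[of R g] A(3) gA by (cases t) auto
    have R: "sum_list (map c R) \<le> (2 * t - 1) * \<phi>" using Suc.IH A(3) prodR by blast
    have "sum_list (map c (P @ [x])) \<le> 2 * \<phi>"
      using small[of P] small[of "[x]"] A P gA by simp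
    then have "sum_list (map c L) \<le> 2 * \<phi> + (2 * t - 1) * \<phi>" using L R by simp
    also have "\<dots> = (2 * Suc t - 1) * \<phi>" using \<open>t \<ge> 1\<close> by (cases t) (auto simp: algebra_simps)
    finally show ?thesis .
  qed
qed

lemma m_even_Suc:
  assumes MN: "MN_seqs m n s" and j: "j \<ge> 1"
  shows "m (2 * Suc j) = (if j = 1 then 1 else m (2 * j)) * m (2 * j) ^ s j"
proof -
  have prod: "\<forall>j\<ge>2. m (2 * j) = (\<Prod>i\<in>{1..<j}. m (2 * i) ^ s i)"
    using MN unfolding MN_seqs_def by blast
  have "m (2 * Suc j) = (\<Prod>i\<in>{1..<Suc j}. m (2 * i) ^ s i)"
    using prod j by (metis Suc_le_mono one_add_one plus_1_eq_Suc)
  also have "\<dots> = (\<Prod>i\<in>{1..<j}. m (2 * i) ^ s i) * m (2 * j) ^ s j"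
    using j by (simp add: prod.atLeastLessThan_Suc)
  finally have "m (2 * Suc j) = (\<Prod>i\<in>{1..<j}. m (2 * i) ^ s i) * m (2 * j) ^ s j" .
  moreover have "(\<Prod>i\<in>{1..<j}. m (2 * i) ^ s i) = (if j = 1 then 1 else m (2 * j))"
    using prod j by simp
  ultimately show ?thesis by simp
qed

lemma p_seq_Suc: "j \<ge> 1 \<Longrightarrow> p_seq n s (Suc j) = p_seq n s j + s j * n (2 * j)"
  unfolding p_seq_def by simp

text \<open>The cost bound for k = 1 and k = 2, where m_2 = m_1^5 and 5 n_1 < n_2 are used.\<close>

lemma level_bound_1:
  assumes MN: "MN_seqs m n s"
    and L: "set L \<subseteq> {0..<1}" "prod_list (map (level m) L) < m 2"
  shows "sum_list (map (level n) L) < p_seq n s 1"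
proof -
  have m1: "m 1 > 1" and m2: "m 2 = m 1 ^ 5" and n1: "n 1 \<ge> 1"
    using MN unfolding MN_seqs_def by auto
  define a where "a = count_list L 0"
  have "m 1 ^ a < m 1 ^ 5"
    using level_prod_count[OF L(1), of m] L(2) m2 unfolding a_def by simp
  then have "a < 5" using m1 by (simp add: power_strict_increasing_iff)
  then have "a * n 1 < 5 * n 1" using n1 by simp
  moreover have "p_seq n s 1 = 5 * n 1" unfolding p_seq_def by simp
  ultimately show ?thesis using level_sum_count[OF L(1), of n] unfolding a_def by simp
qed

lemma level_bound_2:
  assumes MN: "MN_seqs m n s"
    and L: "set L \<subseteq> {0..<2}" "prod_list (map (level m) L) < m 4"
  shows "sum_list (map (level n) L) < p_seq n s 2"
proof -
  have m1: "m 1 > 1" and m2: "m 2 = m 1 ^ 5" and n1: "n 1 \<ge> 1" and n12: "5 * n 1 < n 2"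
    using MN unfolding MN_seqs_def by auto
  have m4: "m 4 = m 2 ^ s 1" using m_even_Suc[OF MN, of 1] by simp
  have one: "{1..<2::nat} = {1}" by auto
  define a where "a = count_list L 0"
  define r where "r = count_list L 1"
  have "m 1 ^ (a + 5 * r) < m 1 ^ (5 * s 1)"
    using level_prod_count[OF L(1), of m] L(2) m2 m4
    unfolding a_def r_def one by (simp add: power_add power_mult)
  then have ar: "a + 5 * r < 5 * s 1" using m1 by (simp add: power_strict_increasing_iff)
  define d where "d = s 1 - r"
  have sd: "s 1 = r + d" using ar unfolding d_def by simp
  have "a * n 1 < 5 * d * n 1" using ar sd n1 by simp
  also have "\<dots> \<le> d * n 2" using n12 by simp
  finally have "a * n 1 + r * n 2 < s 1 * n 2" using sd by (simp add: algebra_simps)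
  moreover have "p_seq n s 2 = 5 * n 1 + s 1 * n 2" unfolding p_seq_def one by simp
  ultimately show ?thesis
    using level_sum_count[OF L(1), of n] unfolding a_def r_def one by simp
qed

lemma prod_list_split_count:
  "prod_list (map g L) = (g a :: nat) ^ count_list L a * prod_list (map g (filter (\<lambda>x. x \<noteq> a) L))"
  by (induction L) (auto simp: algebra_simps)

lemma sum_list_split_count:
  "sum_list (map g L) = count_list L a * (g a :: nat) + sum_list (map g (filter (\<lambda>x. x \<noteq> a) L))"
  by (induction L) (auto simp: algebra_simps)

lemma levels_below:
  assumes MN: "MN_seqs m n s" and "a < j"
  shows "1 \<le> level m a \<and> level m a < m (2 * j)"
proof -
  have mono: "\<forall>i\<ge>1. m i < m (Suc i)" and "m 1 > 3" using MN unfolding MN_seqs_def by auto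
  then have "1 \<le> level m a" using level_ge_4[of m a] by simp
  moreover have "level m a < m (2 * j)"
    using increasing_less[OF mono, of "if a = 0 then 1 else 2 * a" "2 * j"] assms(2)
    unfolding level_def by auto
  ultimately show ?thesis ..
qed

text \<open>If the lower levels weigh less than m_{2j}^t with t >= 2, their cost is at most
  (t - 1) n_{2j}; this is where 4 f_j < n_{2j} is used.\<close>

lemma level_bound_heavy:
  assumes MN: "MN_seqs m n s" and j: "j \<ge> 2" and t: "t \<ge> 2"
    and R: "set R \<subseteq> {0..<j}" "prod_list (map (level m) R) < m (2 * j) ^ t"
  shows "sum_list (map (level n) R) \<le> (t - 1) * n (2 * j)"
proof -
  have fj: "4 * f_seq m n j < n (2 * j)" using MN j unfolding MN_seqs_def by auto
  have below: "\<forall>a\<in>{0..<j}. 1 \<le> level m a \<and> level m a < m (2 * j)"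
    using levels_below[OF MN] by simp
  have M1: "m (2 * j) > 1" using below j by fastforce
  have small: "sum_list (map (level n) R') \<le> f_seq m n j"
    if "set R' \<subseteq> {0..<j}" "prod_list (map (level m) R') < m (2 * j)" for R'
    using f_seq_bound[of m j R' n] MN_seqs_m_ge_2[OF MN] that j by simp
  have "4 * sum_list (map (level n) R) \<le> 4 * ((2 * t - 1) * f_seq m n j)"
    using greedy_block_bound[OF M1 below small R] by simp
  also have "\<dots> \<le> (2 * t - 1) * n (2 * j)" using fj by simp
  also have "\<dots> \<le> (4 * (t - 1)) * n (2 * j)" using t by (intro mult_right_mono) auto
  finally show ?thesis by simp
qed

lemma level_split_top:
  assumes MN: "MN_seqs m n s" and j: "j \<ge> 2"
    and L: "set L \<subseteq> {0..<Suc j}" "prod_list (map (level m) L) < m (2 * Suc j)"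
  obtains r t R where "r + t = Suc (s j)" "t \<ge> 1" "set R \<subseteq> {0..<j}"
    "prod_list (map (level m) R) < m (2 * j) ^ t"
    "sum_list (map (level n) L) = r * n (2 * j) + sum_list (map (level n) R)"
proof -
  define M where "M = m (2 * j)"
  define r where "r = count_list L j"
  define R where "R = filter (\<lambda>x. x \<noteq> j) L"
  have top: "level m j = M" "level n j = n (2 * j)" using j unfolding level_def M_def by auto
  have setR: "set R \<subseteq> {0..<j}" using L(1) unfolding R_def by auto
  have "M > 1" using levels_below[OF MN, of 0 j] j unfolding M_def by simp
  have "1 \<le> prod_list (map (level m) R)"
    using setR levels_below[OF MN] by (intro prod_list_ge_1) auto
  then have "M ^ r \<le> M ^ r * prod_list (map (level m) R)" by simp
  moreover have prodL: "M ^ r * prod_list (map (level m) R) < M ^ Suc (s j)"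
    using L(2) m_even_Suc[OF MN, of j] j prod_list_split_count[of "level m" L j]
    unfolding r_def R_def top M_def by simp
  ultimately have "M ^ r < M ^ Suc (s j)" by linarith
  then have "r < Suc (s j)" using \<open>M > 1\<close> power_strict_increasing_iff by blast
  then obtain t where t: "r + t = Suc (s j)" "t \<ge> 1"
    by (intro that[of "Suc (s j) - r"]) auto
  have "M ^ r * prod_list (map (level m) R) < M ^ r * M ^ t"
    using prodL unfolding t(1)[symmetric] power_add .
  then have "prod_list (map (level m) R) < M ^ t" by simp
  moreover have "sum_list (map (level n) L) = r * n (2 * j) + sum_list (map (level n) R)"
    using sum_list_split_count[of "level n" L j] top unfolding r_def R_def by simp
  ultimately show ?thesis using that t setR unfolding M_def by blast
qed

text \<open>Induction step: if t = 1 the rest is handled by the induction hypothesis,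
  otherwise by the estimate for heavy lists.\<close>

lemma level_bound_step:
  assumes MN: "MN_seqs m n s" and j: "j \<ge> 2"
    and IH: "\<And>R. set R \<subseteq> {0..<j} \<Longrightarrow> prod_list (map (level m) R) < m (2 * j)
              \<Longrightarrow> sum_list (map (level n) R) < p_seq n s j"
    and L: "set L \<subseteq> {0..<Suc j}" "prod_list (map (level m) L) < m (2 * Suc j)"
  shows "sum_list (map (level n) L) < p_seq n s (Suc j)"
proof -
  obtain r t R where rt: "r + t = Suc (s j)" "t \<ge> 1" and R: "set R \<subseteq> {0..<j}"
      "prod_list (map (level m) R) < m (2 * j) ^ t"
    and sumL: "sum_list (map (level n) L) = r * n (2 * j) + sum_list (map (level n) R)"
    using level_split_top[OF MN j L] .
  have p: "p_seq n s (Suc j) = p_seq n s j + s j * n (2 * j)"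
    using p_seq_Suc[of j n s] j by simp
  show ?thesis
  proof (cases "t = 1")
    case True
    then have "sum_list (map (level n) R) < p_seq n s j" using IH R by simp
    then show ?thesis using sumL p rt True by simp
  next
    case False
    then have "sum_list (map (level n) R) \<le> (t - 1) * n (2 * j)"
      using level_bound_heavy[OF MN j _ R] rt(2) by simp
    then have "sum_list (map (level n) L) \<le> (r + (t - 1)) * n (2 * j)"
      using sumL by (simp add: add_mult_distrib)
    also have "r + (t - 1) = s j" using rt by arith
    finally have "sum_list (map (level n) L) \<le> s j * n (2 * j)" .
    moreover have "p_seq n s j > 0" using MN unfolding MN_seqs_def p_seq_def by simp
    ultimately show ?thesis using p by linarith
  qed
qed

lemma level_bound:
  assumes MN: "MN_seqs m n s" and k: "k \<ge> 1"
    and L: "set L \<subseteq> {0..<k}" "prod_list (map (level m) L) < m (2 * k)"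
  shows "sum_list (map (level n) L) < p_seq n s k"
  using k L
proof (induction k arbitrary: L rule: nat_induct_at_least)
  case base
  then show ?case using level_bound_1[OF MN, of L] by simp
next
  case (Suc j)
  show ?case
  proof (cases "j = 1")
    case True
    then have j2: "Suc j = 2" by simp
    show ?thesis unfolding j2 using level_bound_2[OF MN, of L] Suc.prems[unfolded j2] by simp
  next
    case False
    then have "j \<ge> 2" using Suc.hyps by simp
    then show ?thesis using level_bound_step[OF MN _ Suc.IH Suc.prems] by blast
  qed
qed

section \<open>Functional trees\<close>

lemma ftree_induct:
  assumes "\<And>j. P (Leaf j)" "\<And>j cs. (\<And>gc. gc \<in> set cs \<Longrightarrow> P (snd gc)) \<Longrightarrow> P (Node j cs)"
  shows "P t"
  using wf_tree.induct[of "\<lambda>_ _ _ _ _ t. P t" undefined undefined undefined undefined undefined t] assms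
  by blast

lemma leaves_Node:
  "(j, a, b) \<in> set (leaves m (Node J cs)) \<longleftrightarrow>
    (\<exists>g c a' b'. (g, c) \<in> set cs \<and> (j, a', b') \<in> set (leaves m c) \<and> a = g * a' \<and> b = real (m J) * b')"
  by (auto simp: split_beta) force+

lemma block_seq_eval:
  fixes gs :: "real list"
  assumes "sorted_wrt (\<lambda>x y. Max (supp x) < Min (supp y)) V" "\<forall>x\<in>set V. finite (supp x)"
    and "i < length V" "j \<in> supp (V ! i)"
  shows "(\<Sum>l<length V. gs ! l * (V ! l) j) = gs ! i * (V ! i) j"
proof -
  have "(V ! l) j = 0" if l: "l < length V" "l \<noteq> i" for l
  proof (rule ccontr)
    assume "(V ! l) j \<noteq> 0"
    then have jl: "j \<in> supp (V ! l)" unfolding supp_def by simp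
    have fin: "finite (supp (V ! i))" "finite (supp (V ! l))" using assms(2,3) l by auto
    consider "l < i" | "i < l" using l(2) by linarith
    then show False
    proof cases
      case 1
      then have "Max (supp (V ! l)) < Min (supp (V ! i))"
        using assms(1,3) by (auto simp: sorted_wrt_iff_nth_less)
      then show False using fin jl assms(4) by (meson Max_ge Min_le leD le_less_trans)
    next
      case 2
      then have "Max (supp (V ! i)) < Min (supp (V ! l))"
        using assms(1) l by (auto simp: sorted_wrt_iff_nth_less)
      then show False using fin jl assms(4) by (meson Max_ge Min_le leD le_less_trans)
    qed
  qed
  then show ?thesis using assms(3) by (simp add: sum.remove[of _ i])
qed

lemma tval_Node_nth:
  "tval m (Node J cs) j = (\<Sum>l<length cs. fst (cs ! l) * tval m (snd (cs ! l)) j) / real (m J)"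
  by (simp add: sum_list_sum_nth atLeast0LessThan split_beta)

lemma leaf_coefficient:
  assumes mpos: "\<forall>j\<ge>1. m j \<ge> (1::nat)"
  shows "wf_tree m n p q NN t \<Longrightarrow> (j, a, b) \<in> set (leaves m t)
    \<Longrightarrow> a \<noteq> 0 \<and> b \<ge> 1 \<and> tval m t j = a / b"
proof (induction t arbitrary: j a b rule: ftree_induct)
  case (1 i)
  then show ?case by (simp add: ustar_def)
next
  case (2 J cs)
  obtain g c a' b' where gc: "(g, c) \<in> set cs" "(j, a', b') \<in> set (leaves m c)"
    and ab: "a = g * a'" "b = real (m J) * b'"
    using 2(3) leaves_Node by metis
  have wf: "J \<ge> 1" "\<forall>gc\<in>set cs. fst gc \<noteq> 0 \<and> wf_tree m n p q NN (snd gc)"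
      "admissible (n J) (map (\<lambda>(g, c). tval m c) cs)"
    using 2(2) by auto
  have "wf_tree m n p q NN c" "g \<noteq> 0" using wf(2) gc(1) by force+
  then have IH: "a' \<noteq> 0 \<and> b' \<ge> 1 \<and> tval m c j = a' / b'"
    using 2(1)[of "(g, c)"] gc by simp
  have mJ: "real (m J) \<ge> 1" using mpos wf(1) by simp
  obtain i where i: "i < length cs" "cs ! i = (g, c)" using gc(1) by (metis in_set_conv_nth)
  define V where "V = map (\<lambda>(g, c). tval m c) cs"
  have V: "sorted_wrt (\<lambda>x y. Max (supp x) < Min (supp y)) V" "\<forall>x\<in>set V. finite (supp x)"
    using wf(3) unfolding admissible_def block_seq_def V_def by auto
  have "j \<in> supp (V ! i)" using i IH unfolding V_def supp_def by simp
  from block_seq_eval[OF V _ this, of "map fst cs"]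
  have "(\<Sum>l<length cs. fst (cs ! l) * tval m (snd (cs ! l)) j) = g * (a' / b')"
    using i IH unfolding V_def by (simp add: split_beta)
  then have "tval m (Node J cs) j = a / b"
    unfolding tval_Node_nth using ab mJ by (simp add: field_simps)
  moreover have "b \<ge> 1" using ab IH mJ by (metis mult_mono' mult_1_right zero_le_one)
  moreover have "a \<noteq> 0" using \<open>g \<noteq> 0\<close> IH ab by simp
  ultimately show ?case by blast
qed

section \<open>Selected leaves and their budget\<close>

definition selected :: "(nat \<Rightarrow> nat) \<Rightarrow> nat \<Rightarrow> ftree \<Rightarrow> real \<Rightarrow> nat set" where
  "selected m k t B = {j. \<exists>a b. (j, a, b) \<in> set (leaves m t) \<and> b \<le> B \<and> 2 * k \<le> j}"

definition budget_set :: "(nat \<Rightarrow> nat) \<Rightarrow> (nat \<Rightarrow> nat) \<Rightarrow> nat \<Rightarrow> real \<Rightarrow> nat set" where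
  "budget_set m n k B = {sum_list (map (level n) L) | L.
      set L \<subseteq> {0..<k} \<and> real (prod_list (map (level m) L)) \<le> B}"

definition budget :: "(nat \<Rightarrow> nat) \<Rightarrow> (nat \<Rightarrow> nat) \<Rightarrow> nat \<Rightarrow> real \<Rightarrow> nat" where
  "budget m n k B = Max (insert 0 (budget_set m n k B))"

text \<open>All weights are >= 2, so a multiset of weight <= B has at most B elements.\<close>

lemma budget_set_finite:
  assumes m2: "\<And>i. level m i \<ge> 2"
  shows "finite (budget_set m n k B)"
proof -
  let ?Ls = "{L. set L \<subseteq> {0..<k} \<and> length L \<le> nat \<lfloor>B\<rfloor>}"
  have "budget_set m n k B \<subseteq> (\<lambda>L. sum_list (map (level n) L)) ` ?Ls"
  proof
    fix v assume "v \<in> budget_set m n k B"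
    then obtain L where L: "v = sum_list (map (level n) L)" "set L \<subseteq> {0..<k}"
        "real (prod_list (map (level m) L)) \<le> B"
      unfolding budget_set_def by auto
    have "length L < 2 ^ length L" by simp
    also have "2 ^ length L \<le> prod_list (map (level m) L)"
      using m2 by (induction L) (auto intro: mult_mono)
    finally have "length L \<le> nat \<lfloor>B\<rfloor>" using L(3) by linarith
    then show "v \<in> (\<lambda>L. sum_list (map (level n) L)) ` ?Ls" using L by auto
  qed
  moreover have "finite ?Ls" by (rule finite_lists_length_le) simp
  ultimately show ?thesis using finite_subset by blast
qed

text \<open>Adding level i to an optimal multiset for the bound B' shows that the budget grows
  by the cost of level i when the bound grows by the factor of its weight.\<close>

lemma budget_step:
  assumes m2: "\<And>i. level m i \<ge> 2"
    and i: "i < k" and B': "B' \<ge> 1" and B: "real (level m i) * B' \<le> B"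
  shows "budget m n k B' + level n i \<le> budget m n k B"
proof -
  have "0 \<in> budget_set m n k B'"
    unfolding budget_set_def using B' by (intro CollectI exI[of _ "[]"]) auto
  then have "budget m n k B' \<in> budget_set m n k B'"
    unfolding budget_def using budget_set_finite[OF m2] by (metis Max_in empty_iff finite_insert insert_absorb)
  then obtain L where L: "budget m n k B' = sum_list (map (level n) L)" "set L \<subseteq> {0..<k}"
      "real (prod_list (map (level m) L)) \<le> B'"
    unfolding budget_set_def by auto
  have "real (prod_list (map (level m) (i # L))) \<le> real (level m i) * B'"
    using L(3) by (simp add: mult_left_mono)
  then have "sum_list (map (level n) (i # L)) \<in> budget_set m n k B"
    unfolding budget_set_def using L(2) i B by (intro CollectI exI[of _ "i # L"]) auto
  then have "sum_list (map (level n) (i # L)) \<le> budget m n k B"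
    unfolding budget_def using budget_set_finite[OF m2] by simp
  then show ?thesis using L(1) by simp
qed

lemma budget_below_p:
  assumes MN: "MN_seqs m n s" and k: "k \<ge> 1" and B: "B < real (m (2 * k))"
  shows "budget m n k B \<le> p_seq n s k - 1"
  unfolding budget_def
proof (rule Max.boundedI)
  show "finite (insert 0 (budget_set m n k B))"
    using budget_set_finite[OF MN_level_ge_2[OF MN]] by simp
next
  fix v assume "v \<in> insert 0 (budget_set m n k B)"
  then show "v \<le> p_seq n s k - 1"
  proof
    assume "v \<in> budget_set m n k B"
    then obtain L where L: "v = sum_list (map (level n) L)" "set L \<subseteq> {0..<k}"
        "real (prod_list (map (level m) L)) \<le> B"
      unfolding budget_set_def by auto
    then have "prod_list (map (level m) L) < m (2 * k)" using B by linarith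
    then show ?thesis using level_bound[OF MN k L(2)] L(1) by simp
  qed simp
qed simp

lemma selected_ge: "x \<in> selected m k t B \<Longrightarrow> 2 * k \<le> x"
  unfolding selected_def by blast

lemma selected_Node:
  assumes "real (m J) > 0"
  shows "selected m k (Node J cs) B = (\<Union>gc\<in>set cs. selected m k (snd gc) (B / real (m J)))"
proof -
  have "b \<le> B \<longleftrightarrow> b' \<le> B / real (m J)" if "b = real (m J) * b'" for b b'
    using assms that by (simp add: pos_le_divide_eq mult.commute)
  then show ?thesis unfolding selected_def leaves_Node by fastforce
qed

lemma selected_leaf_data:
  assumes "\<forall>j\<ge>1. m j \<ge> (1::nat)" "wf_tree m n p q NN t" "j \<in> selected m k t B"
  shows "j \<in> supp (tval m t) \<and> 1 \<le> B"
proof -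
  obtain a b where "(j, a, b) \<in> set (leaves m t)" "b \<le> B" using assms(3) unfolding selected_def by auto
  then show ?thesis using leaf_coefficient[OF assms(1,2)] unfolding supp_def by fastforce
qed

lemma selected_Node_nonempty:
  assumes mpos: "\<forall>j\<ge>1. m j \<ge> (1::nat)" and wf: "wf_tree m n p q NN (Node J cs)"
    and ne: "selected m k (Node J cs) B \<noteq> {}"
  shows "real (m J) \<le> B"
proof -
  have mJ: "real (m J) \<ge> 1" using mpos wf by simp
  obtain gc j where gc: "gc \<in> set cs" "j \<in> selected m k (snd gc) (B / real (m J))"
    using ne selected_Node[of m J k cs B] mJ by auto
  have "wf_tree m n p q NN (snd gc)" using wf gc(1) by auto
  then have "1 \<le> B / real (m J)" using selected_leaf_data[OF mpos _ gc(2)] by blast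
  then show ?thesis using mJ by (simp add: le_divide_eq_1_pos)
qed

lemma wf_Node_children:
  assumes mpos: "\<forall>j\<ge>1. m j \<ge> (1::nat)" and wf: "wf_tree m n p q NN (Node J cs)"
  defines "S \<equiv> \<lambda>c. supp (tval m (snd c))"
  shows "sorted_wrt (\<lambda>c c'. Max (S c) < Min (S c')) cs"
    and "(\<lambda>c. Min (S c)) ` set cs \<in> schreier (n J)"
    and "\<And>c. c \<in> set cs \<Longrightarrow> finite (S c) \<and> S c \<noteq> {} \<and> selected m k (snd c) B \<subseteq> S c"
proof -
  have adm: "admissible (n J) (map (\<lambda>(g, c). tval m c) cs)" using wf by simp
  then show "sorted_wrt (\<lambda>c c'. Max (S c) < Min (S c')) cs"
    unfolding admissible_def block_seq_def S_def by (simp add: sorted_wrt_map split_beta)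
  have "{Min (supp x) |x. x \<in> set (map (\<lambda>(g, c). tval m c) cs)} = (\<lambda>c. Min (S c)) ` set cs"
    unfolding S_def by (auto simp: split_beta)
  then show "(\<lambda>c. Min (S c)) ` set cs \<in> schreier (n J)"
    using adm unfolding admissible_def by simp
  fix c assume c: "c \<in> set cs"
  have "finite (S c)" using adm c unfolding admissible_def block_seq_def S_def by (auto simp: split_beta)
  moreover have "S c \<noteq> {}"
  proof -
    have "tval m (snd c) \<noteq> (\<lambda>_. 0)" using wf c by simp
    then show ?thesis unfolding S_def supp_def by auto
  qed
  moreover have "selected m k (snd c) B \<subseteq> S c"
    using selected_leaf_data[OF mpos] wf c unfolding S_def by auto
  ultimately show "finite (S c) \<and> S c \<noteq> {} \<and> selected m k (snd c) B \<subseteq> S c" by blast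
qed

lemma length_distinct_even_indices:
  assumes "distinct xs" "\<forall>x\<in>set xs. even x \<and> 1 \<le> x \<and> x < 2 * k"
  shows "length xs \<le> k - 1"
proof -
  have "set xs \<subseteq> (\<lambda>i. 2 * i) ` {1..<k}"
    using assms(2) by (auto elim!: evenE simp: image_iff)
  then have "card (set xs) \<le> card {1..<k::nat}" using card_image_le card_mono
    by (metis finite_atLeastLessThan finite_imageI le_trans)
  then show ?thesis using distinct_card[OF assms(1)] by simp
qed

text \<open>A node J with m_J <= B < m_{2k} has level J div 2 < k, so its weight and cost
  extend the budget of its children.\<close>

lemma node_budget_step:
  assumes MN: "MN_seqs m n s" and k: "k \<ge> 1" and J: "J \<ge> 1"
    and BJ: "real (m J) \<le> B" and Bk: "B < real (m (2 * k))"
  shows "budget m n k (B / real (m J)) + level n (J div 2) \<le> budget m n k B"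
proof -
  define i where "i = J div 2"
  have mJ: "real (m J) \<ge> 1" using MN_m_pos[OF MN] J by simp
  have im: "level m i \<le> m J"
    using MN_m_le[OF MN, of "2 * i" J] MN_m_le[OF MN, of 1 J] J unfolding level_def i_def by auto
  have "i < k"
  proof (rule ccontr)
    assume "\<not> i < k"
    then have "m (2 * k) \<le> level m i" using MN_m_le[OF MN, of "2 * k" "2 * i"] k unfolding level_def by auto
    then show False using im BJ Bk by linarith
  qed
  moreover have "B / real (m J) \<ge> 1" using BJ mJ by (simp add: le_divide_eq_1_pos)
  moreover have "real (level m i) * (B / real (m J)) \<le> B"
    using im mJ BJ by (simp add: divide_le_eq mult_right_mono)
  ultimately show ?thesis using budget_step[OF MN_level_ge_2[OF MN]] unfolding i_def by blast
qed

text \<open>Even node: compose the S_{budget}-selections of the children along the S_{n_J}-set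
  of their minima.\<close>

lemma selected_Node_even:
  assumes MN: "MN_seqs m n s" and k: "k \<ge> 1"
    and wf: "wf_tree m n p q NN (Node J cs)" and J: "even J"
    and BJ: "real (m J) \<le> B" and Bk: "B < real (m (2 * k))"
    and IH: "\<And>c. c \<in> set cs \<Longrightarrow>
      selected m k (snd c) (B / real (m J)) \<in> schreier (budget m n k (B / real (m J)))"
  shows "selected m k (Node J cs) B \<in> schreier (budget m n k B)"
proof -
  define B' where "B' = B / real (m J)"
  have mpos: "\<forall>j\<ge>1. m j \<ge> (1::nat)" using MN_m_pos[OF MN] .
  have J1: "J \<ge> 1" using wf by simp
  have mJ: "real (m J) \<ge> 1" using mpos J1 by simp
  have "selected m k (Node J cs) B = (\<Union>c\<in>set cs. selected m k (snd c) B')"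
    using selected_Node[of m J k cs B] mJ unfolding B'_def by simp
  also have "\<dots> \<in> schreier (budget m n k B' + n J)"
  proof (rule schreier_union_anchored[OF wf_Node_children(2,1)[OF mpos wf]])
    fix c assume "c \<in> set cs"
    then show "finite (supp (tval m (snd c))) \<and> supp (tval m (snd c)) \<noteq> {}
        \<and> selected m k (snd c) B' \<subseteq> supp (tval m (snd c))
        \<and> selected m k (snd c) B' \<in> schreier (budget m n k B')"
      using wf_Node_children(3)[OF mpos wf] IH unfolding B'_def by blast
  qed
  finally have sel: "selected m k (Node J cs) B \<in> schreier (budget m n k B' + n J)" .
  have "level n (J div 2) = n J" using J J1 unfolding level_def by auto
  then have "budget m n k B' + n J \<le> budget m n k B"
    using node_budget_step[OF MN k J1 BJ Bk] unfolding B'_def by simp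
  then show ?thesis using sel schreier_mono by blast
qed

text \<open>Odd node: its children are even nodes with distinct indices, and only those of
  weight < m_{2k}, i.e. index < 2k, can select anything.\<close>

lemma odd_Node_few_selected:
  assumes MN: "MN_seqs m n s" and k: "k \<ge> 1"
    and wf: "wf_tree m n p q NN (Node J cs)" and J: "odd J" and B: "B < real (m (2 * k))"
  shows "length (filter (\<lambda>c. selected m k (snd c) B \<noteq> {}) cs) \<le> k - 1"
proof -
  let ?idx = "map (\<lambda>(g, c). node_index c) (filter (\<lambda>c. selected m k (snd c) B \<noteq> {}) cs)"
  have children: "\<forall>c\<in>set cs. is_node (snd c) \<and> even (node_index (snd c))"
    and dist: "distinct (map (\<lambda>(g, c). node_index c) cs)" using wf J by auto
  have "\<forall>x\<in>set ?idx. even x \<and> 1 \<le> x \<and> x < 2 * k"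
  proof
    fix x assume "x \<in> set ?idx"
    then obtain c where c: "c \<in> set cs" "selected m k (snd c) B \<noteq> {}" "x = node_index (snd c)"
      by (auto simp: split_beta)
    then obtain J' cs' where c': "snd c = Node J' cs'" "even J'"
      using children unfolding is_node_def node_index_def by (auto split: ftree.splits)
    have "wf_tree m n p q NN (snd c)" using wf c(1) by simp
    then have wf': "wf_tree m n p q NN (Node J' cs')" using c'(1) by simp
    then have mJ': "real (m J') \<le> B"
      using selected_Node_nonempty[OF MN_m_pos[OF MN] wf'] c(2) c'(1) by simp
    have "J' < 2 * k"
    proof (rule ccontr)
      assume "\<not> J' < 2 * k"
      then have "m (2 * k) \<le> m J'" using MN_m_le[OF MN, of "2 * k" J'] k by simp
      then show False using mJ' B by linarith
    qed
    then show "even x \<and> 1 \<le> x \<and> x < 2 * k" using c(3) c' wf' unfolding node_index_def by simp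
  qed
  moreover have "distinct ?idx" using distinct_map_filter[OF dist] .
  ultimately show ?thesis using length_distinct_even_indices by fastforce
qed

text \<open>Odd node: the nonempty selections of its children are at most k - 1 successive
  sets above 2k, so one more Schreier step suffices, and level J div 2 costs at least one.\<close>

lemma selected_Node_odd:
  assumes MN: "MN_seqs m n s" and k: "k \<ge> 1"
    and wf: "wf_tree m n p q NN (Node J cs)" and J: "odd J"
    and BJ: "real (m J) \<le> B" and Bk: "B < real (m (2 * k))"
    and IH: "\<And>c. c \<in> set cs \<Longrightarrow>
      selected m k (snd c) (B / real (m J)) \<in> schreier (budget m n k (B / real (m J)))"
  shows "selected m k (Node J cs) B \<in> schreier (budget m n k B)"
proof -
  define B' where "B' = B / real (m J)"
  define sel where "sel c = selected m k (snd c) B'" for c :: "real \<times> ftree"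
  have mpos: "\<forall>j\<ge>1. m j \<ge> (1::nat)" using MN_m_pos[OF MN] .
  have J1: "J \<ge> 1" using wf by simp
  have mJ: "real (m J) \<ge> 1" using mpos J1 by simp
  have "B' \<le> B" using BJ mJ unfolding B'_def by (simp add: divide_le_eq mult_le_cancel_left1)
  then have B'k: "B' < real (m (2 * k))" using Bk by simp
  have "selected m k (Node J cs) B = \<Union>(set (map sel cs))"
    using selected_Node[of m J k cs B] mJ unfolding B'_def sel_def by simp
  moreover have "\<Union>(set (map sel cs)) \<in> schreier (Suc (budget m n k B'))"
  proof (rule schreier_union_Suc)
    have "sorted_wrt (\<lambda>c c'. Min (supp (tval m (snd c))) < Min (supp (tval m (snd c')))
        \<and> set_less (sel c) (sel c')) cs"
    proof (rule successive_selection[OF wf_Node_children(1)[OF mpos wf]])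
      fix c assume "c \<in> set cs"
      then show "finite (supp (tval m (snd c))) \<and> supp (tval m (snd c)) \<noteq> {}
          \<and> sel c \<subseteq> supp (tval m (snd c))"
        using wf_Node_children(3)[OF mpos wf] unfolding sel_def by blast
    qed
    then show "sorted_wrt set_less (map sel cs)"
      unfolding sorted_wrt_map by (rule sorted_wrt_mono_rel[rotated]) blast
    show "\<forall>A\<in>set (map sel cs). A \<in> schreier (budget m n k B')"
      using IH unfolding sel_def B'_def by auto
    show "\<forall>A\<in>set (map sel cs). \<forall>x\<in>A. k - 1 \<le> x"
      unfolding sel_def using selected_ge by fastforce
    show "length (filter (\<lambda>A. A \<noteq> {}) (map sel cs)) \<le> k - 1"
      using odd_Node_few_selected[OF MN k wf J B'k] unfolding sel_def by (simp add: filter_map comp_def)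
  qed
  moreover have "Suc (budget m n k B') \<le> budget m n k B"
    using node_budget_step[OF MN k J1 BJ Bk] MN_level_n_pos[OF MN, of "J div 2"]
    unfolding B'_def by linarith
  ultimately show ?thesis using schreier_mono by metis
qed

lemma selected_in_schreier:
  assumes MN: "MN_seqs m n s" and k: "k \<ge> 1"
  shows "wf_tree m n p q NN t \<Longrightarrow> B < real (m (2 * k))
    \<Longrightarrow> selected m k t B \<in> schreier (budget m n k B)"
proof (induction t arbitrary: B rule: ftree_induct)
  case (1 i)
  have "selected m k (Leaf i) B = (if 1 \<le> B \<and> 2 * k \<le> i then {i} else {})"
    unfolding selected_def by auto
  then show ?case using k by (auto simp: schreier_empty intro!: schreier_singleton)
next
  case (2 J cs)
  show ?case
  proof (cases "real (m J) \<le> B")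
    case False
    then have "selected m k (Node J cs) B = {}"
      using selected_Node_nonempty[OF MN_m_pos[OF MN] 2(2)] by blast
    then show ?thesis by (simp add: schreier_empty)
  next
    case True
    have "B / real (m J) \<le> B"
      using True MN_m_pos[OF MN] 2(2) by (simp add: divide_le_eq mult_le_cancel_left1)
    then have IH: "\<And>c. c \<in> set cs \<Longrightarrow>
        selected m k (snd c) (B / real (m J)) \<in> schreier (budget m n k (B / real (m J)))"
      using 2 by fastforce
    show ?thesis
      using selected_Node_even[OF MN k 2(2) _ True 2(3) IH]
        selected_Node_odd[OF MN k 2(2) _ True 2(3) IH] by blast
  qed
qed

lemma threshold_iff:
  fixes a b M :: real
  assumes "a \<noteq> 0" "b \<ge> 1" "M > 0"
  shows "2 * \<bar>a\<bar> / M \<le> \<bar>a\<bar> / b \<longleftrightarrow> b \<le> M / 2"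
proof -
  have "2 * \<bar>a\<bar> / M \<le> \<bar>a\<bar> / b \<longleftrightarrow> \<bar>a\<bar> * (2 * b) \<le> \<bar>a\<bar> * M"
    using assms by (simp add: divide_le_eq le_divide_eq field_simps)
  also have "\<dots> \<longleftrightarrow> 2 * b \<le> M" using assms(1) by simp
  finally show ?thesis by linarith
qed

lemma large_coefficients_selected:
  assumes MN: "MN_seqs m n s" and k: "k \<ge> 1"
    and tree: "functional_tree m n p q NN x g0 t"
  shows "{j. \<exists>a b. (j, a, b) \<in> set (leaves m t)
            \<and> \<bar>x j\<bar> \<ge> 2 * \<bar>g0 * a\<bar> / real (m (2 * k)) \<and> j \<ge> 2 * k}
         = selected m k t (real (m (2 * k)) / 2)"
proof -
  have g0: "\<bar>g0\<bar> = 1" and x: "x = (\<lambda>i. g0 * tval m t i)" and wf: "wf_tree m n p q NN t"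
    using tree unfolding functional_tree_def by auto
  have "m (2 * k) \<ge> 1" using MN_m_pos[OF MN] k by simp
  then have M: "real (m (2 * k)) > 0" by simp
  have "\<bar>x j\<bar> \<ge> 2 * \<bar>g0 * a\<bar> / real (m (2 * k)) \<longleftrightarrow> b \<le> real (m (2 * k)) / 2"
    if "(j, a, b) \<in> set (leaves m t)" for j a b
  proof -
    have "a \<noteq> 0" "b \<ge> 1" "tval m t j = a / b"
      using leaf_coefficient[OF MN_m_pos[OF MN] wf that] by auto
    then show ?thesis using threshold_iff[OF _ _ M] g0 unfolding x by (simp add: abs_mult)
  qed
  then show ?thesis unfolding selected_def by blast
qed

theorem mainTheorem10:
  fixes m n s :: "nat \<Rightarrow> nat" and p q :: real and NN :: "functional set"
    and x :: functional and k :: nat and g0 :: real and t :: ftree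
  assumes "MN_seqs m n s"
    and "1 < p" and "1 < q" and "1 / p + 1 / q = 1"
    and "MNq_schreier m n p q NN"
    and "x \<in> NN"
    and "k \<ge> 1"
    and "functional_tree m n p q NN x g0 t"
  shows "{j. \<exists>a b. (j, a, b) \<in> set (leaves m t)
            \<and> \<bar>x j\<bar> \<ge> 2 * \<bar>g0 * a\<bar> / real (m (2 * k)) \<and> j \<ge> 2 * k}
         \<in> schreier (p_seq n s k - 1)"
proof -
  define B where "B = real (m (2 * k)) / 2"
  have "m (2 * k) \<ge> 1" using MN_m_pos[OF assms(1)] assms(7) by simp
  then have B: "B < real (m (2 * k))" unfolding B_def by simp
  have wf: "wf_tree m n p q NN t" using assms(8) unfolding functional_tree_def by simp
  have "selected m k t B \<in> schreier (budget m n k B)"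
    using selected_in_schreier[OF assms(1,7) wf B] .
  moreover have "budget m n k B \<le> p_seq n s k - 1" using budget_below_p[OF assms(1,7) B] .
  ultimately show ?thesis
    using large_coefficients_selected[OF assms(1,7,8)] schreier_mono unfolding B_def by metis
qed

end
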